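(* Let $(G,Y)$ be a $C$-group. Every element $g\in G$ can be written as $g=g_1g_2^{-1}$ with $g_1,g_2$ positive elements; and for such a representation, $g\in[G,G]$ if and only if $\mathrm{ab}(g_1)=\mathrm{ab}(g_2)$. If moreover $(G,Y)$ is a finite $C$-group, then every $g\in G$ has such a representation with $g_2=\alpha_G(s_\Gamma^n)$ for some $n\ge0$ and $g_1=\alpha_G(s_1)$ for some $s_1\in S(G,Y)^G$.
   Context: A $C$-group is a pair $(G,Y)$ with $Y$ a conjugation-invariant subset of the group $G$ consisting of finitely many conjugacy classes, $1\notin Y$, such that $G$ has a presentation with generators the elements of $Y$ and defining relations all of the form $z^{-1}yz=y'$ ($y,y',z\in Y$); it is finite if $Y$ is finite. $\mathrm{ab}:G\to G/[G,G]$ is the abelianization map. The factorization semigroup $S(G,Y)$ is generated by symbols $x_y$, $y\in Y$, subject to $x_{g_1}x_{g_2}=x_{g_2}x_{g_2^{-1}g_1g_2}=x_{g_1g_2g_1^{-1}}x_{g_1}$; $\alpha_G:S(G,Y)\to G$, $x_y\mapsto y$. An element $g\in G$ is positive if $g=\alpha_G(s)$ for some $s\in S(G,Y)$. For $s=x_{g_1}\cdots x_{g_n}$, $G_s$ is the subgroup generated by the $g_j$, and $S(G,Y)^G=\{s:G_s=G\}$. For finite $(G,Y)$: $Y=C_1\sqcup\dots\sqcup C_m$ (conjugacy classes, $C_i=\{y_{i,1},\dots,y_{i,n_i}\}$), $p_i$ the least $p\ge1$ with $y^p$ central for $y\in C_i$, and $s_\Gamma=\prod_{i=1}^m\prod_{j=1}^{n_i}x_{y_{i,j}}^{p_i}$.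 *)

theory Defs
  imports "HOL-Algebra.Algebra"
begin

text \<open>Words in the free group on Y: a letter (y, True) stands for y, (y, False) for y^-1.\<close>

definition eval_word :: "('a, 'b) monoid_scheme \<Rightarrow> ('a \<times> bool) list \<Rightarrow> 'a" where
  "eval_word G w = foldr (\<lambda>(y, b) acc. (if b then y else inv\<^bsub>G\<^esub> y) \<otimes>\<^bsub>G\<^esub> acc) w \<one>\<^bsub>G\<^esub>"

text \<open>Two words are congruent iff
  they represent the same element of the group presented by generators Y and these
  defining relations.\<close>

inductive pres_cong :: "('a, 'b) monoid_scheme \<Rightarrow> 'a set \<Rightarrow> ('a \<times> bool) list \<Rightarrow> ('a \<times> bool) list \<Rightarrow> bool"
  for G Y where
  pc_refl: "pres_cong G Y w w"
| pc_sym: "pres_cong G Y u v \<Longrightarrow> pres_cong G Y v u"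
| pc_trans: "pres_cong G Y u v \<Longrightarrow> pres_cong G Y v w \<Longrightarrow> pres_cong G Y u w"
| pc_ctxt: "set (map fst a) \<subseteq> Y \<Longrightarrow> set (map fst c) \<subseteq> Y \<Longrightarrow>
     pres_cong G Y u v \<Longrightarrow> pres_cong G Y (a @ u @ c) (a @ v @ c)"
| pc_cancel: "y \<in> Y \<Longrightarrow> pres_cong G Y [(y, b), (y, \<not> b)] []"
| pc_rel: "y \<in> Y \<Longrightarrow> y' \<in> Y \<Longrightarrow> z \<in> Y \<Longrightarrow> inv\<^bsub>G\<^esub> z \<otimes>\<^bsub>G\<^esub> y \<otimes>\<^bsub>G\<^esub> z = y' \<Longrightarrow>
     pres_cong G Y [(z, False), (y, True), (z, True)] [(y', True)]"

definition conj_class :: "('a, 'b) monoid_scheme \<Rightarrow> 'a \<Rightarrow> 'a set" where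
  "conj_class G y = {g \<otimes>\<^bsub>G\<^esub> y \<otimes>\<^bsub>G\<^esub> inv\<^bsub>G\<^esub> g | g. g \<in> carrier G}"

text \<open>(G, Y) is a C-group: Y is a conjugation-invariant subset of G not containing 1,
  consisting of finitely many conjugacy classes, and the natural map from the group
  presented by generators Y and relations z^-1 y z = y' onto G is an isomorphism
  (Y generates G, and every relation among words over Y is a consequence of the
  defining relations).\<close>

definition C_group :: "('a, 'b) monoid_scheme \<Rightarrow> 'a set \<Rightarrow> bool" where
  "C_group G Y \<longleftrightarrow> group G \<and> Y \<subseteq> carrier G \<and> \<one>\<^bsub>G\<^esub> \<notin> Y
    \<and> (\<forall>g \<in> carrier G. \<forall>y \<in> Y. g \<otimes>\<^bsub>G\<^esub> y \<otimes>\<^bsub>G\<^esub> inv\<^bsub>G\<^esub> g \<in> Y)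
    \<and> finite (conj_class G ` Y)
    \<and> (\<forall>g \<in> carrier G. \<exists>w. set (map fst w) \<subseteq> Y \<and> eval_word G w = g)
    \<and> (\<forall>u v. set (map fst u) \<subseteq> Y \<longrightarrow> set (map fst v) \<subseteq> Y \<longrightarrow>
          eval_word G u = eval_word G v \<longrightarrow> pres_cong G Y u v)"

definition finite_C_group :: "('a, 'b) monoid_scheme \<Rightarrow> 'a set \<Rightarrow> bool" where
  "finite_C_group G Y \<longleftrightarrow> C_group G Y \<and> finite Y"

definition ab :: "('a, 'b) monoid_scheme \<Rightarrow> 'a \<Rightarrow> 'a set" where
  "ab G g = derived G (carrier G) #>\<^bsub>G\<^esub> g"

text \<open>Elements of S(G,Y) are represented by words in the symbols x_y (y in Y), i.e. lists of
  elements of Y (the empty word is the identity 1 of S(G,Y)), modulo the congruence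
  generated by the Hurwitz relations.\<close>

inductive fact_cong :: "('a, 'b) monoid_scheme \<Rightarrow> 'a set \<Rightarrow> 'a list \<Rightarrow> 'a list \<Rightarrow> bool"
  for G Y where
  fc_refl: "fact_cong G Y w w"
| fc_sym: "fact_cong G Y u v \<Longrightarrow> fact_cong G Y v u"
| fc_trans: "fact_cong G Y u v \<Longrightarrow> fact_cong G Y v w \<Longrightarrow> fact_cong G Y u w"
| fc_ctxt: "set a \<subseteq> Y \<Longrightarrow> set c \<subseteq> Y \<Longrightarrow> fact_cong G Y u v \<Longrightarrow> fact_cong G Y (a @ u @ c) (a @ v @ c)"
| fc_move1: "g1 \<in> Y \<Longrightarrow> g2 \<in> Y \<Longrightarrow>
     fact_cong G Y [g1, g2] [g2, inv\<^bsub>G\<^esub> g2 \<otimes>\<^bsub>G\<^esub> g1 \<otimes>\<^bsub>G\<^esub> g2]"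
| fc_move2: "g1 \<in> Y \<Longrightarrow> g2 \<in> Y \<Longrightarrow>
     fact_cong G Y [g1, g2] [g1 \<otimes>\<^bsub>G\<^esub> g2 \<otimes>\<^bsub>G\<^esub> inv\<^bsub>G\<^esub> g1, g1]"

definition fact_class :: "('a, 'b) monoid_scheme \<Rightarrow> 'a set \<Rightarrow> 'a list \<Rightarrow> 'a list set" where
  "fact_class G Y w = {v. set v \<subseteq> Y \<and> fact_cong G Y w v}"

definition fact_sg :: "('a, 'b) monoid_scheme \<Rightarrow> 'a set \<Rightarrow> 'a list set set" where
  "fact_sg G Y = {fact_class G Y w | w. set w \<subseteq> Y}"

definition fs_rep :: "'a list set \<Rightarrow> 'a list" where
  "fs_rep s = (SOME w. w \<in> s)"

definition fs_mult :: "('a, 'b) monoid_scheme \<Rightarrow> 'a set \<Rightarrow> 'a list set \<Rightarrow> 'a list set \<Rightarrow> 'a list set" where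
  "fs_mult G Y s t = fact_class G Y (fs_rep s @ fs_rep t)"

definition fs_pow :: "('a, 'b) monoid_scheme \<Rightarrow> 'a set \<Rightarrow> 'a list set \<Rightarrow> nat \<Rightarrow> 'a list set" where
  "fs_pow G Y s n = fact_class G Y (concat (replicate n (fs_rep s)))"

definition alpha :: "('a, 'b) monoid_scheme \<Rightarrow> 'a list set \<Rightarrow> 'a" where
  "alpha G s = foldr (\<otimes>\<^bsub>G\<^esub>) (fs_rep s) \<one>\<^bsub>G\<^esub>"

definition positive :: "('a, 'b) monoid_scheme \<Rightarrow> 'a set \<Rightarrow> 'a \<Rightarrow> bool" where
  "positive G Y g \<longleftrightarrow> (\<exists>s \<in> fact_sg G Y. alpha G s = g)"

definition G_sub :: "('a, 'b) monoid_scheme \<Rightarrow> 'a list set \<Rightarrow> 'a set" where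
  "G_sub G s = generate G (set (fs_rep s))"

definition fact_sg_full :: "('a, 'b) monoid_scheme \<Rightarrow> 'a set \<Rightarrow> 'a list set set" where
  "fact_sg_full G Y = {s \<in> fact_sg G Y. G_sub G s = carrier G}"

definition center :: "('a, 'b) monoid_scheme \<Rightarrow> 'a set" where
  "center G = {z \<in> carrier G. \<forall>g \<in> carrier G. z \<otimes>\<^bsub>G\<^esub> g = g \<otimes>\<^bsub>G\<^esub> z}"

text \<open>p_i: least p \<ge> 1 with y^p central (the same for all y in a conjugacy class).\<close>
definition central_period :: "('a, 'b) monoid_scheme \<Rightarrow> 'a \<Rightarrow> nat" where
  "central_period G y = (LEAST p. p \<ge> 1 \<and> y [^]\<^bsub>G\<^esub> p \<in> center G)"

definition class_list :: "('a, 'b) monoid_scheme \<Rightarrow> 'a set \<Rightarrow> 'a set list" where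
  "class_list G Y = (SOME cs. distinct cs \<and> set cs = conj_class G ` Y)"

definition elem_list :: "'a set \<Rightarrow> 'a list" where
  "elem_list C = (SOME ys. distinct ys \<and> set ys = C)"

definition s_Gamma_word :: "('a, 'b) monoid_scheme \<Rightarrow> 'a set \<Rightarrow> 'a list" where
  "s_Gamma_word G Y = concat (map (\<lambda>C. concat (map (\<lambda>y. replicate (central_period G y) y)
      (elem_list C))) (class_list G Y))"

definition s_Gamma :: "('a, 'b) monoid_scheme \<Rightarrow> 'a set \<Rightarrow> 'a list set" where
  "s_Gamma G Y = fact_class G Y (s_Gamma_word G Y)"

end

theory Submission
  imports Defs
begin

text \<open>Since Y is closed under conjugation, an inverse letter y^-1 can be moved past a positive
  element at the price of conjugating it, so induction on words in Y and their inverses writes every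
  element as g1 g2^-1 with g1, g2 positive; membership of g1 g2^-1 in [G,G] is then equality of the
  cosets of g1 and g2. For finite Y, conjugation by the powers of y permutes the finite set Y, so some
  power y^p is central, and hence so is z = alpha(s_Gamma). Each y occurs in s_Gamma, which gives
  y^-1 = q z^-1 with q positive; as z is central the denominator becomes a power of z, and appending
  s_Gamma to the numerator makes its factors generate G.\<close>

definition lprod :: "('a, 'b) monoid_scheme \<Rightarrow> 'a list \<Rightarrow> 'a" where
  "lprod G w = foldr (\<otimes>\<^bsub>G\<^esub>) w \<one>\<^bsub>G\<^esub>"

lemma alpha_eq_lprod: "alpha G s = lprod G (fs_rep s)"
  by (simp add: alpha_def lprod_def)

context monoid begin

lemma lprod_Nil [simp]: "lprod G [] = \<one>"
  by (simp add: lprod_def)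

lemma lprod_Cons [simp]: "lprod G (x # w) = x \<otimes> lprod G w"
  by (simp add: lprod_def)

lemma lprod_closed [intro, simp]: "set w \<subseteq> carrier G \<Longrightarrow> lprod G w \<in> carrier G"
  by (induction w) auto

lemma lprod_append:
  "set u \<subseteq> carrier G \<Longrightarrow> set v \<subseteq> carrier G \<Longrightarrow> lprod G (u @ v) = lprod G u \<otimes> lprod G v"
  by (induction u) (auto simp: m_assoc)

lemma lprod_concat:
  "set (concat ws) \<subseteq> carrier G \<Longrightarrow> lprod G (concat ws) = lprod G (map (lprod G) ws)"
  by (induction ws) (auto simp: lprod_append)

lemma lprod_replicate: "x \<in> carrier G \<Longrightarrow> lprod G (replicate n x) = x [^] n"
  by (induction n) (simp_all add: group_commutes_pow)

lemma lprod_concat_replicate: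
  assumes "set w \<subseteq> carrier G"
  shows "lprod G (concat (replicate n w)) = lprod G w [^] n"
proof (induction n)
  case (Suc n)
  have "set (concat (replicate n w)) \<subseteq> carrier G" using assms by (induction n) auto
  then show ?case using Suc assms by (simp add: lprod_append group_commutes_pow)
qed simp

lemma lprod_in_submonoid: "submonoid H G \<Longrightarrow> set w \<subseteq> H \<Longrightarrow> lprod G w \<in> H"
  by (induction w) (auto simp: submonoid.one_closed submonoid.m_closed)

end

context group begin

lemma mult_inv_cancel_left [simp]: "x \<in> carrier G \<Longrightarrow> y \<in> carrier G \<Longrightarrow> x \<otimes> (inv x \<otimes> y) = y"
  by (simp flip: m_assoc)

lemma inv_mult_cancel_left [simp]: "x \<in> carrier G \<Longrightarrow> y \<in> carrier G \<Longrightarrow> inv x \<otimes> (x \<otimes> y) = y"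
  by (simp flip: m_assoc)

lemma lprod_conj:
  "a \<in> carrier G \<Longrightarrow> set w \<subseteq> carrier G \<Longrightarrow>
    lprod G (map (\<lambda>x. a \<otimes> x \<otimes> inv a) w) = a \<otimes> lprod G w \<otimes> inv a"
  by (induction w) (auto simp: m_assoc)

lemma inv_commute: "a \<in> carrier G \<Longrightarrow> b \<in> carrier G \<Longrightarrow> a \<otimes> b = b \<otimes> a \<Longrightarrow> inv a \<otimes> b = b \<otimes> inv a"
  by (simp add: inv_solve_left inv_solve_right m_assoc)

lemma centralizer_subgroup:
  assumes "b \<in> carrier G"
  shows "subgroup {g \<in> carrier G. b \<otimes> g = g \<otimes> b} G"
proof (rule subgroupI)
  fix g h assume "g \<in> {g \<in> carrier G. b \<otimes> g = g \<otimes> b}" "h \<in> {g \<in> carrier G. b \<otimes> g = g \<otimes> b}"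
  then have g: "g \<in> carrier G" "b \<otimes> g = g \<otimes> b" and h: "h \<in> carrier G" "b \<otimes> h = h \<otimes> b" by auto
  show "inv g \<in> {g \<in> carrier G. b \<otimes> g = g \<otimes> b}"
    using assms g inv_commute[of g b] by simp
  have "b \<otimes> (g \<otimes> h) = (g \<otimes> b) \<otimes> h" by (simp only: m_assoc[OF assms g(1) h(1), symmetric] g(2))
  also have "\<dots> = (g \<otimes> h) \<otimes> b"
    by (simp only: m_assoc[OF g(1) assms h(1)] h(2) m_assoc[OF g(1) h(1) assms])
  finally show "g \<otimes> h \<in> {g \<in> carrier G. b \<otimes> g = g \<otimes> b}" using g h by simp
qed (use assms in auto)

lemma center_subgroup: "subgroup (center G) G"
proof (rule subgroupI)
  fix a b assume a: "a \<in> center G" and b: "b \<in> center G"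
  then have ab: "a \<in> carrier G" "b \<in> carrier G" "\<forall>g \<in> carrier G. a \<otimes> g = g \<otimes> a"
    "\<forall>g \<in> carrier G. b \<otimes> g = g \<otimes> b"
    unfolding center_def by auto
  then show "inv a \<in> center G" unfolding center_def using inv_commute by auto
  have "a \<otimes> b \<otimes> g = g \<otimes> (a \<otimes> b)" if g: "g \<in> carrier G" for g
  proof -
    have ag: "a \<otimes> g = g \<otimes> a" and bg: "b \<otimes> g = g \<otimes> b" using ab(3,4) g by blast+
    have "a \<otimes> b \<otimes> g = a \<otimes> (g \<otimes> b)" by (simp only: m_assoc[OF ab(1,2) g] bg)
    also have "\<dots> = (g \<otimes> a) \<otimes> b" by (simp only: m_assoc[OF ab(1) g ab(2), symmetric] ag)
    also have "\<dots> = g \<otimes> (a \<otimes> b)" by (simp only: m_assoc[OF g ab(1,2)])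
    finally show ?thesis .
  qed
  then show "a \<otimes> b \<in> center G" using ab(1,2) unfolding center_def by blast
qed (auto simp: center_def)

lemma rcos_eq_iff:
  assumes "subgroup H G" "a \<in> carrier G" "b \<in> carrier G"
  shows "H #> a = H #> b \<longleftrightarrow> a \<otimes> inv b \<in> H"
  using assms repr_independence[of a H b] rcos_self[of a H] subgroup.rcos_module[of H G b a]
  by auto

lemma ab_eq_iff:
  "a \<in> carrier G \<Longrightarrow> b \<in> carrier G \<Longrightarrow> ab G a = ab G b \<longleftrightarrow> a \<otimes> inv b \<in> derived G (carrier G)"
  unfolding ab_def by (rule rcos_eq_iff) (auto intro: derived_is_subgroup)

lemma fact_cong_foldr:
  assumes Y: "Y \<subseteq> carrier G" and "fact_cong G Y u v"
  shows "\<forall>z \<in> carrier G. foldr (\<otimes>) u z = foldr (\<otimes>) v z"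
  using assms(2)
proof (induction rule: fact_cong.induct)
  case (fc_ctxt a c u v)
  have "foldr (\<otimes>) c z \<in> carrier G" if "z \<in> carrier G" for z
    using fc_ctxt.hyps(2) Y that by (induction c) auto
  then show ?case using fc_ctxt.IH by simp
next
  case (fc_move1 g1 g2)
  then have "g1 \<in> carrier G" "g2 \<in> carrier G" using Y by auto
  then show ?case by (simp add: m_assoc)
next
  case (fc_move2 g1 g2)
  then have "g1 \<in> carrier G" "g2 \<in> carrier G" using Y by auto
  then show ?case by (simp add: m_assoc)
qed auto

lemma fact_cong_lprod: "Y \<subseteq> carrier G \<Longrightarrow> fact_cong G Y u v \<Longrightarrow> lprod G u = lprod G v"
  using fact_cong_foldr unfolding lprod_def by blast

lemma fact_cong_subgroup:
  assumes Y: "Y \<subseteq> carrier G" and "fact_cong G Y u v"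
  shows "\<forall>H. subgroup H G \<longrightarrow> (set u \<subseteq> H \<longleftrightarrow> set v \<subseteq> H)"
  using assms(2)
proof (induction rule: fact_cong.induct)
  case (fc_move1 g1 g2)
  then have g: "g1 \<in> carrier G" "g2 \<in> carrier G" using Y by auto
  then have "g1 = g2 \<otimes> (inv g2 \<otimes> g1 \<otimes> g2) \<otimes> inv g2" by (simp add: m_assoc)
  then show ?case using g
    by (metis insert_subset list.set subgroup.m_closed subgroup.m_inv_closed)
next
  case (fc_move2 g1 g2)
  then have g: "g1 \<in> carrier G" "g2 \<in> carrier G" using Y by auto
  then have "g2 = inv g1 \<otimes> (g1 \<otimes> g2 \<otimes> inv g1) \<otimes> g1" by (simp add: m_assoc)
  then show ?case using g
    by (metis insert_subset list.set subgroup.m_closed subgroup.m_inv_closed)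
qed auto

lemma fs_rep_class: "set w \<subseteq> Y \<Longrightarrow> set (fs_rep (fact_class G Y w)) \<subseteq> Y \<and> fact_cong G Y w (fs_rep (fact_class G Y w))"
  unfolding fs_rep_def using someI[of "\<lambda>v. v \<in> fact_class G Y w" w]
  by (simp add: fact_class_def fc_refl)

lemma alpha_class: "Y \<subseteq> carrier G \<Longrightarrow> set w \<subseteq> Y \<Longrightarrow> alpha G (fact_class G Y w) = lprod G w"
  using fs_rep_class fact_cong_lprod by (metis alpha_eq_lprod)

lemma alpha_fs_pow:
  assumes Y: "Y \<subseteq> carrier G" and w: "set w \<subseteq> Y"
  shows "alpha G (fs_pow G Y (fact_class G Y w) n) = lprod G w [^] n"
proof -
  define r where "r = fs_rep (fact_class G Y w)"
  have r: "set r \<subseteq> Y" "lprod G r = lprod G w"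
    using fs_rep_class[OF w] fact_cong_lprod[OF Y] unfolding r_def by metis+
  have "set (concat (replicate n r)) \<subseteq> Y" using r(1) by auto
  then have "alpha G (fs_pow G Y (fact_class G Y w) n) = lprod G (concat (replicate n r))"
    unfolding fs_pow_def r_def[symmetric] using alpha_class[OF Y] by blast
  also have "\<dots> = lprod G w [^] n" using lprod_concat_replicate r Y by auto
  finally show ?thesis .
qed

lemma eval_word_in_subgroup: "subgroup H G \<Longrightarrow> set (map fst w) \<subseteq> H \<Longrightarrow> eval_word G w \<in> H"
  by (induction w) (auto simp: eval_word_def subgroup.one_closed subgroup.m_closed subgroup.m_inv_closed)

lemma eval_word_Cons: "eval_word G ((y, b) # w) = (if b then y else inv y) \<otimes> eval_word G w"
  by (simp add: eval_word_def)

end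

lemma set_class_list:
  assumes "finite Y"
  shows "set (class_list G Y) = conj_class G ` Y"
proof -
  have "\<exists>cs. distinct cs \<and> set cs = conj_class G ` Y"
    using finite_distinct_list[OF finite_imageI[OF assms]] by metis
  then show ?thesis unfolding class_list_def by (metis (mono_tags, lifting) someI_ex)
qed

lemma set_elem_list:
  assumes "finite C"
  shows "set (elem_list C) = C"
proof -
  have "\<exists>ys. distinct ys \<and> set ys = C" using finite_distinct_list[OF assms] by metis
  then show ?thesis unfolding elem_list_def by (metis (mono_tags, lifting) someI_ex)
qed

locale c_group =
  fixes G (structure) and Y
  assumes C_group: "C_group G Y"
begin

sublocale group G
  using C_group by (simp add: C_group_def)

lemma Y_carrier: "Y \<subseteq> carrier G"
  using C_group by (simp add: C_group_def)

lemma conj_closed: "g \<in> carrier G \<Longrightarrow> y \<in> Y \<Longrightarrow> g \<otimes> y \<otimes> inv g \<in> Y"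
  using C_group by (simp add: C_group_def)

lemma eval_word_surj: "g \<in> carrier G \<Longrightarrow> \<exists>w. set (map fst w) \<subseteq> Y \<and> eval_word G w = g"
  using C_group by (simp add: C_group_def)

lemma Y_generates: "subgroup H G \<Longrightarrow> Y \<subseteq> H \<Longrightarrow> carrier G \<subseteq> H"
  using eval_word_surj eval_word_in_subgroup by (metis dual_order.trans subsetI)

lemma center_if_commutes_with_Y:
  assumes "b \<in> carrier G" "\<forall>y \<in> Y. b \<otimes> y = y \<otimes> b"
  shows "b \<in> center G"
proof -
  have "Y \<subseteq> {g \<in> carrier G. b \<otimes> g = g \<otimes> b}" using assms(2) Y_carrier by auto
  then have "carrier G \<subseteq> {g \<in> carrier G. b \<otimes> g = g \<otimes> b}"
    using Y_generates[OF centralizer_subgroup[OF assms(1)]] by blast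
  then show ?thesis using assms(1) by (auto simp: center_def)
qed

lemma conj_class_subset: "y \<in> Y \<Longrightarrow> conj_class G y \<subseteq> Y"
  using conj_closed unfolding conj_class_def by auto

lemma conj_class_self: "y \<in> Y \<Longrightarrow> y \<in> conj_class G y"
  using Y_carrier unfolding conj_class_def by (auto intro!: exI[of _ \<one>])

lemma positive_iff: "positive G Y g \<longleftrightarrow> (\<exists>w. set w \<subseteq> Y \<and> lprod G w = g)"
  unfolding positive_def fact_sg_def using alpha_class[OF Y_carrier] by auto

lemma positive_carrier: "positive G Y g \<Longrightarrow> g \<in> carrier G"
  using positive_iff Y_carrier by auto

lemma positive_one: "positive G Y \<one>"
  unfolding positive_iff by (intro exI[of _ "[]"]) simp

lemma positive_gen: "y \<in> Y \<Longrightarrow> positive G Y y"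
  using Y_carrier unfolding positive_iff by (intro exI[of _ "[y]"]) auto

lemma positive_mult:
  assumes "positive G Y a" "positive G Y b"
  shows "positive G Y (a \<otimes> b)"
proof -
  obtain u v where "set u \<subseteq> Y" "lprod G u = a" "set v \<subseteq> Y" "lprod G v = b"
    using assms positive_iff by meson
  then have "set (u @ v) \<subseteq> Y" "lprod G (u @ v) = a \<otimes> b"
    using Y_carrier lprod_append[of u v] by auto
  then show ?thesis using positive_iff by blast
qed

lemma positive_conj:
  assumes "y \<in> Y" "positive G Y p"
  shows "positive G Y (inv y \<otimes> p \<otimes> y)"
proof -
  obtain w where w: "set w \<subseteq> Y" "lprod G w = p" using assms(2) positive_iff by auto
  have y: "inv y \<in> carrier G" "inv (inv y) = y" using assms(1) Y_carrier by auto
  have "set (map (\<lambda>x. inv y \<otimes> x \<otimes> inv (inv y)) w) \<subseteq> Y"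
    using w(1) conj_closed[OF y(1)] by auto
  moreover have "lprod G (map (\<lambda>x. inv y \<otimes> x \<otimes> inv (inv y)) w) = inv y \<otimes> p \<otimes> y"
    using lprod_conj[OF y(1)] w Y_carrier y(2) by auto
  ultimately show ?thesis unfolding positive_iff by blast
qed

text \<open>A letter y^-1 is absorbed by conjugating the positive numerator:
  y^-1 g1 g2^-1 = (y^-1 g1 y) (g2 y)^-1.\<close>

lemma eval_word_positive_quotient:
  "set (map fst w) \<subseteq> Y \<Longrightarrow> \<exists>g1 g2. positive G Y g1 \<and> positive G Y g2 \<and> eval_word G w = g1 \<otimes> inv g2"
proof (induction w)
  case Nil
  then show ?case using positive_one by (intro exI[of _ \<one>]) (simp add: eval_word_def)
next
  case (Cons a w)
  obtain y b where a: "a = (y, b)" by force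
  with Cons obtain g1 g2 where IH: "positive G Y g1" "positive G Y g2" "eval_word G w = g1 \<otimes> inv g2"
    and y: "y \<in> Y" by auto
  have c: "y \<in> carrier G" "g1 \<in> carrier G" "g2 \<in> carrier G"
    using y IH Y_carrier positive_carrier by auto
  show ?case
  proof (cases b)
    case True
    then have "eval_word G (a # w) = (y \<otimes> g1) \<otimes> inv g2"
      using a IH c by (simp add: eval_word_Cons m_assoc)
    with IH show ?thesis using positive_mult[OF positive_gen[OF y]] by blast
  next
    case False
    then have "eval_word G (a # w) = (inv y \<otimes> g1 \<otimes> y) \<otimes> inv (g2 \<otimes> y)"
      using a IH c by (simp add: eval_word_Cons m_assoc inv_mult_group)
    moreover have "positive G Y (inv y \<otimes> g1 \<otimes> y)" "positive G Y (g2 \<otimes> y)"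
      using IH positive_conj[OF y] positive_mult[OF _ positive_gen[OF y]] by auto
    ultimately show ?thesis by blast
  qed
qed

lemma positive_quotient_exists: "g \<in> carrier G \<Longrightarrow> \<exists>g1 g2. positive G Y g1 \<and> positive G Y g2 \<and> g = g1 \<otimes> inv g2"
  using eval_word_surj eval_word_positive_quotient by metis

lemma fact_class_full:
  assumes w: "set w \<subseteq> Y" "Y \<subseteq> set w"
  shows "fact_class G Y w \<in> fact_sg_full G Y"
proof -
  define r where "r = fs_rep (fact_class G Y w)"
  have r: "set r \<subseteq> Y" "fact_cong G Y w r" using fs_rep_class[OF w(1)] unfolding r_def by auto
  have H: "subgroup (generate G (set r)) G" using r Y_carrier by (intro generate_is_subgroup) auto
  have "set r \<subseteq> generate G (set r)" by (auto intro: generate.incl)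
  then have "set w \<subseteq> generate G (set r)" using fact_cong_subgroup[OF Y_carrier r(2)] H by blast
  then have "carrier G \<subseteq> generate G (set r)" using Y_generates[OF H] w(2) by blast
  moreover have "generate G (set r) \<subseteq> carrier G" using r Y_carrier by (intro generate_incl) auto
  ultimately show ?thesis
    using w(1) unfolding fact_sg_full_def fact_sg_def G_sub_def r_def by auto
qed

text \<open>If y occurs in a positive word w = a y c, then y^-1 = ((y^-1 a y) c) (a y c)^-1
  with y^-1 a y c positive.\<close>

lemma inv_letter_as_quotient:
  assumes w: "set w \<subseteq> Y" and y: "y \<in> set w"
  shows "\<exists>q. positive G Y q \<and> inv y = q \<otimes> inv (lprod G w)"
proof -
  obtain a c where ac: "w = a @ y # c" using split_list[OF y] by blast
  define A where "A = lprod G a"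
  define C where "C = lprod G c"
  have pos: "positive G Y A" "positive G Y C" "y \<in> Y"
    using w ac positive_iff unfolding A_def C_def by auto
  have car: "A \<in> carrier G" "C \<in> carrier G" "y \<in> carrier G"
    using pos positive_carrier Y_carrier by auto
  have "set a \<subseteq> carrier G" "set c \<subseteq> carrier G" using ac w Y_carrier by auto
  then have "lprod G w = A \<otimes> y \<otimes> C"
    using ac car unfolding A_def C_def by (simp add: lprod_append m_assoc)
  then have "inv y = (inv y \<otimes> A \<otimes> y \<otimes> C) \<otimes> inv (lprod G w)"
    using car by (simp add: m_assoc inv_mult_group)
  then show ?thesis using positive_mult[OF positive_conj[OF pos(3,1)] pos(2)] by blast
qed

lemma inv_positive_as_quotient:
  assumes z: "z \<in> center G" and inv_gen: "\<forall>y \<in> Y. \<exists>q. positive G Y q \<and> inv y = q \<otimes> inv z"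
    and p: "positive G Y p"
  shows "\<exists>q n. positive G Y q \<and> inv p = q \<otimes> inv (z [^] (n::nat))"
proof -
  have zc: "z \<in> carrier G" using z by (simp add: center_def)
  obtain w where w: "set w \<subseteq> Y" "lprod G w = p" using p positive_iff by auto
  have "\<exists>q n. positive G Y q \<and> inv (lprod G w) = q \<otimes> inv (z [^] (n::nat))"
    using w(1)
  proof (induction w)
    case Nil
    then show ?case using positive_one by (intro exI[of _ \<one>] exI[of _ 0]) auto
  next
    case (Cons y w)
    then obtain q n where q: "positive G Y q" "inv (lprod G w) = q \<otimes> inv (z [^] (n::nat))"
      by auto
    obtain qy where qy: "positive G Y qy" "inv y = qy \<otimes> inv z"
      using inv_gen Cons.prems by auto
    have y: "y \<in> carrier G" using Cons.prems Y_carrier by auto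
    have car: "q \<in> carrier G" "qy \<in> carrier G" "set w \<subseteq> carrier G"
      using q qy positive_carrier Cons.prems Y_carrier by auto
    have "z [^] n \<otimes> qy = qy \<otimes> z [^] n"
      using group_commutes_pow[of z qy n] z car by (simp add: center_def)
    then have comm: "inv (z [^] n) \<otimes> qy = qy \<otimes> inv (z [^] n)"
      using inv_commute car zc by simp
    have "inv (lprod G (y # w)) = q \<otimes> (inv (z [^] n) \<otimes> qy) \<otimes> inv z"
      using q qy y car zc by (simp add: inv_mult_group m_assoc)
    also have "\<dots> = (q \<otimes> qy) \<otimes> (inv (z [^] n) \<otimes> inv z)"
      using comm car zc by (simp add: m_assoc)
    also have "inv (z [^] n) \<otimes> inv z = inv (z [^] Suc n)"
      using zc by (metis nat_pow_Suc2 inv_mult_group nat_pow_closed)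
    finally show ?case using positive_mult[OF q(1) qy(1)] by blast
  qed
  then show ?thesis using w(2) by blast
qed

end

locale finite_c_group = c_group +
  assumes finite_Y: "finite Y"
begin

text \<open>Conjugation by powers of y permutes the finite set Y, so two powers y^i, y^j (i < j)
  act identically on Y; then y^(j - i) commutes with the generators.\<close>

lemma central_power_exists:
  assumes y: "y \<in> Y"
  shows "\<exists>p::nat \<ge> 1. y [^] p \<in> center G"
proof -
  have yc: "y \<in> carrier G" using y Y_carrier by auto
  define act where "act n = (\<lambda>x \<in> Y. inv (y [^] n) \<otimes> x \<otimes> y [^] n)" for n :: nat
  have "act n \<in> Y \<rightarrow>\<^sub>E Y" for n
    using conj_closed[of "inv (y [^] n)"] yc unfolding act_def by auto
  then have "finite (range act)"
    using finite_PiE[OF finite_Y finite_Y] by (meson finite_subset image_subsetI)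
  then have "\<not> inj act" using finite_imageD by blast
  then obtain i j where ij: "i < j" "act i = act j"
    unfolding inj_def by (metis linorder_neq_iff)
  define b where "b = y [^] (j - i)"
  have b: "b \<in> carrier G" "y [^] j = y [^] i \<otimes> b"
    using yc ij(1) unfolding b_def by (auto simp: nat_pow_mult)
  have "b \<otimes> x = x \<otimes> b" if x: "x \<in> Y" for x
  proof -
    define x' where "x' = y [^] i \<otimes> x \<otimes> inv (y [^] i)"
    have x': "x' \<in> Y" using conj_closed x yc unfolding x'_def by auto
    have xc: "x \<in> carrier G" using x Y_carrier by auto
    have "x = act i x'" using x' xc yc unfolding act_def x'_def by (simp add: m_assoc)
    also have "\<dots> = act j x'" using ij(2) by simp
    also have "\<dots> = inv b \<otimes> (x \<otimes> b)"
      using x' xc yc b unfolding act_def x'_def by (simp add: m_assoc inv_mult_group)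
    finally show ?thesis using xc b by (metis mult_inv_cancel_left m_closed)
  qed
  then have "b \<in> center G" using center_if_commutes_with_Y b(1) by blast
  then show ?thesis using ij(1) unfolding b_def by (intro exI[of _ "j - i"]) simp
qed

lemma central_period_spec:
  assumes "y \<in> Y"
  shows "central_period G y \<ge> 1" "y [^] central_period G y \<in> center G"
  using LeastI_ex[OF central_power_exists[OF assms]] unfolding central_period_def by blast+

lemma finite_conj_class: "y \<in> Y \<Longrightarrow> finite (conj_class G y)"
  using conj_class_subset finite_Y finite_subset by blast

lemma set_s_Gamma_word: "set (s_Gamma_word G Y) = Y"
proof -
  have "set (s_Gamma_word G Y) =
      (\<Union>C \<in> conj_class G ` Y. \<Union>y \<in> set (elem_list C). set (replicate (central_period G y) y))"
    by (simp add: s_Gamma_word_def set_class_list[OF finite_Y])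
  also have "\<dots> = (\<Union>C \<in> conj_class G ` Y. C)"
  proof (rule SUP_cong[OF refl])
    fix C assume "C \<in> conj_class G ` Y"
    then obtain x where "x \<in> Y" "C = conj_class G x" by auto
    then have "set (elem_list C) = C" "C \<subseteq> Y"
      using set_elem_list[OF finite_conj_class] conj_class_subset by auto
    moreover have "central_period G y \<noteq> 0" if "y \<in> Y" for y
      using central_period_spec(1)[OF that] by auto
    ultimately show "(\<Union>y \<in> set (elem_list C). set (replicate (central_period G y) y)) = C"
      by auto
  qed
  also have "\<dots> = Y"
    using conj_class_subset conj_class_self by blast
  finally show ?thesis .
qed

lemma lprod_s_Gamma_word_central: "lprod G (s_Gamma_word G Y) \<in> center G"
proof -
  let ?block = "\<lambda>y. replicate (central_period G y) y"
  let ?class_block = "\<lambda>C. concat (map ?block (elem_list C))"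
  have Z: "submonoid (center G) G"
    using center_subgroup subgroup.subgroup_is_submonoid by blast
  have block: "set (?block y) \<subseteq> carrier G" "lprod G (?block y) \<in> center G" if "y \<in> Y" for y
    using that Y_carrier central_period_spec(2) by (auto simp: lprod_replicate)
  have class_block: "set (?class_block C) \<subseteq> carrier G" "lprod G (?class_block C) \<in> center G"
    if C: "C \<in> conj_class G ` Y" for C
  proof -
    obtain x where "x \<in> Y" "C = conj_class G x" using C by auto
    then have CY: "set (elem_list C) \<subseteq> Y"
      using set_elem_list[OF finite_conj_class] conj_class_subset by auto
    then show carrier: "set (?class_block C) \<subseteq> carrier G" using block(1) by auto
    have "lprod G (?class_block C) = lprod G (map (lprod G \<circ> ?block) (elem_list C))"
      using lprod_concat[OF carrier] by simp
    also have "\<dots> \<in> center G" by (rule lprod_in_submonoid[OF Z]) (use CY block(2) in auto)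
    finally show "lprod G (?class_block C) \<in> center G" .
  qed
  have "lprod G (s_Gamma_word G Y) = lprod G (map (lprod G \<circ> ?class_block) (class_list G Y))"
    using lprod_concat[of "map ?class_block (class_list G Y)"] class_block(1)
    by (auto simp: s_Gamma_word_def set_class_list[OF finite_Y])
  also have "\<dots> \<in> center G"
    by (rule lprod_in_submonoid[OF Z]) (use class_block(2) in \<open>auto simp: set_class_list[OF finite_Y]\<close>)
  finally show ?thesis .
qed

lemma quotient_by_s_Gamma_power:
  assumes g: "g \<in> carrier G"
  shows "\<exists>n::nat. \<exists>s1 \<in> fact_sg_full G Y. g = alpha G s1 \<otimes> inv alpha G (fs_pow G Y (s_Gamma G Y) n)"
proof -
  define sw where "sw = s_Gamma_word G Y"
  define z where "z = lprod G sw"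
  have sw: "set sw = Y" unfolding sw_def by (rule set_s_Gamma_word)
  have z: "z \<in> center G" "z \<in> carrier G"
    using lprod_s_Gamma_word_central unfolding z_def sw_def center_def by auto
  obtain g1 g2 where g12: "positive G Y g1" "positive G Y g2" "g = g1 \<otimes> inv g2"
    using positive_quotient_exists[OF g] by blast
  have inv_gen: "\<forall>y \<in> Y. \<exists>q. positive G Y q \<and> inv y = q \<otimes> inv z"
    using inv_letter_as_quotient[of sw] sw unfolding z_def by blast
  obtain q and n :: nat where q: "positive G Y q" "inv g2 = q \<otimes> inv (z [^] n)"
    using inv_positive_as_quotient[OF z(1) inv_gen g12(2)] by blast
  obtain u where u: "set u \<subseteq> Y" "lprod G u = g1 \<otimes> q"
    using positive_mult[OF g12(1) q(1)] positive_iff by blast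
  define s1 where "s1 = fact_class G Y (u @ sw)"
  have "set (u @ sw) \<subseteq> Y" "Y \<subseteq> set (u @ sw)" using u sw by auto
  then have s1: "s1 \<in> fact_sg_full G Y" unfolding s1_def by (rule fact_class_full)
  have alpha_s1: "alpha G s1 = g1 \<otimes> q \<otimes> z"
    using alpha_class[OF Y_carrier] lprod_append[of u sw] u sw Y_carrier unfolding s1_def z_def
    by auto
  have alpha_pow: "alpha G (fs_pow G Y (s_Gamma G Y) (Suc n)) = z [^] n \<otimes> z"
    using alpha_fs_pow[OF Y_carrier] sw unfolding s_Gamma_def sw_def[symmetric] z_def by auto
  have "g = (g1 \<otimes> q \<otimes> z) \<otimes> inv (z [^] n \<otimes> z)"
    using g12 q z positive_carrier by (simp add: m_assoc inv_mult_group)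
  then have "g = alpha G s1 \<otimes> inv alpha G (fs_pow G Y (s_Gamma G Y) (Suc n))"
    by (simp only: alpha_s1 alpha_pow)
  with s1 show ?thesis by blast
qed

end

theorem lemma2p18:
  assumes "C_group G Y"
  shows "(\<forall>g \<in> carrier G. \<exists>g1 g2. positive G Y g1 \<and> positive G Y g2 \<and> g = g1 \<otimes>\<^bsub>G\<^esub> inv\<^bsub>G\<^esub> g2)
    \<and> (\<forall>g g1 g2. positive G Y g1 \<longrightarrow> positive G Y g2 \<longrightarrow> g = g1 \<otimes>\<^bsub>G\<^esub> inv\<^bsub>G\<^esub> g2 \<longrightarrow>
          (g \<in> derived G (carrier G) \<longleftrightarrow> ab G g1 = ab G g2))
    \<and> (finite_C_group G Y \<longrightarrow>
        (\<forall>g \<in> carrier G. \<exists>n::nat. \<exists>s1 \<in> fact_sg_full G Y.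
            g = alpha G s1 \<otimes>\<^bsub>G\<^esub> inv\<^bsub>G\<^esub> alpha G (fs_pow G Y (s_Gamma G Y) n)))"
proof -
  interpret c_group G Y by (rule c_group.intro[OF assms])
  have finite: "finite_c_group G Y" if "finite_C_group G Y"
    using that by (simp add: finite_C_group_def finite_c_group_def finite_c_group_axioms_def c_group_axioms)
  show ?thesis
  proof (intro conjI allI ballI impI)
    show "\<exists>g1 g2. positive G Y g1 \<and> positive G Y g2 \<and> g = g1 \<otimes>\<^bsub>G\<^esub> inv\<^bsub>G\<^esub> g2"
      if "g \<in> carrier G" for g
      using positive_quotient_exists[OF that] .
    show "g \<in> derived G (carrier G) \<longleftrightarrow> ab G g1 = ab G g2"
      if "positive G Y g1" "positive G Y g2" "g = g1 \<otimes>\<^bsub>G\<^esub> inv\<^bsub>G\<^esub> g2" for g g1 g2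
      using that ab_eq_iff positive_carrier by simp
    show "\<exists>n::nat. \<exists>s1 \<in> fact_sg_full G Y.
        g = alpha G s1 \<otimes>\<^bsub>G\<^esub> inv\<^bsub>G\<^esub> alpha G (fs_pow G Y (s_Gamma G Y) n)"
      if "finite_C_group G Y" "g \<in> carrier G" for g
      using finite_c_group.quotient_by_s_Gamma_power[OF finite[OF that(1)] that(2)] .
  qed
qed

end
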